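(* Let $n$ be an even positive integer, $m\ge 2$ an integer, and $f$ an integer with $1\le f\le m/2$ and $\gcd(f,m)=1$. Let $G$ be the dense Random Integer Generation game with $n$ players, $m$ strategies and parameter $f$ (defined in the context). Let $\bar{\sigma}$ be the mixed strategy profile in which every player plays the uniform distribution $(1/m,\dots,1/m)$ on $\{0,1,\dots,m-1\}$. Then $\bar{\sigma}$ is an alliance-resistant Nash equilibrium of $G$, and it is the only Nash equilibrium of $G$.
   Context: A one-shot game with $n$ players consists of finite pure-strategy sets $S_1,\dots,S_n$ and utility functions $u_i : S_1\times\cdots\times S_n \to \mathbb{R}$; players choose simultaneously and independently. A mixed strategy for player $i$ is a probability distribution $\sigma_i$ on $S_i$; a mixed strategy profile is $\sigma=(\sigma_1,\dots,\sigma_n)$, and $u_i(\sigma)$ denotes the expected utility when each $s_i$ is drawn independently from $\sigma_i$. A profile $\sigma$ is a Nash equilibrium if for every player $i$ and every mixed strategy $\tilde\sigma_i$ of player $i$, $u_i(\sigma) \ge u_i(\tilde\sigma_i, \sigma_{-i})$. A profile $\sigma$ is an alliance-resistant Nash equilibrium if for every non-empty set $P$ of players and every choice of mixed strategies $\tilde\sigma_P$ for the members of $P$, $u_P(\sigma) \ge u_P(\tilde\sigma_P, \sigma_{-P})$, where $u_P$ is the sum of the utilities of the members of $P$. Define $g:\mathbb{Z}\to\{-1,0,1\}$ by: writing $l$ modulo $m$ as a representative in $\{0,\dots,m-1\}$, $g(l)=1$ if $0\le l\le f-1$, $g(l)=-1$ if $m-f\le l\le m-1$, and $g(l)=0$ otherwise.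 Let $B=B^{(m,f)}$ be the $m\times m$ matrix with rows and columns indexed by $\{0,\dots,m-1\}$ and entries $B_{a,b}=g(b-a)$. The dense RIG game: each player $i\in\{1,\dots,n\}$ has pure strategy set $\{0,1,\dots,m-1\}$; players are paired as $(2k-1,2k)$ for $k=1,\dots,n/2$; at outcome $s=(s_1,\dots,s_n)$ player $2k-1$ receives $B_{s_{2k-1},s_{2k}}$ and player $2k$ receives $-B_{s_{2k-1},s_{2k}}$. *)

theory Defs
  imports Complex_Main "HOL-Library.FuncSet"
begin

text \<open>A finite game in normal form is given by a finite set of players N,
pure-strategy sets S i (finite) and utilities u i :: (player => strategy) => real,
where a pure outcome is an element of PiE N S.\<close>

definition mixed_strategy :: "'a set \<Rightarrow> ('a \<Rightarrow> real) \<Rightarrow> bool" where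
  "mixed_strategy A p \<longleftrightarrow> (\<forall>x\<in>A. 0 \<le> p x) \<and> sum p A = 1"

definition mixed_profile :: "'p set \<Rightarrow> ('p \<Rightarrow> 'a set) \<Rightarrow> ('p \<Rightarrow> 'a \<Rightarrow> real) \<Rightarrow> bool" where
  "mixed_profile N S \<sigma> \<longleftrightarrow> (\<forall>i\<in>N. mixed_strategy (S i) (\<sigma> i))"

definition exp_util ::
  "'p set \<Rightarrow> ('p \<Rightarrow> 'a set) \<Rightarrow> ('p \<Rightarrow> ('p \<Rightarrow> 'a) \<Rightarrow> real) \<Rightarrow> ('p \<Rightarrow> 'a \<Rightarrow> real) \<Rightarrow> 'p \<Rightarrow> real" where
  "exp_util N S u \<sigma> i = (\<Sum>s\<in>PiE N S. (\<Prod>j\<in>N. \<sigma> j (s j)) * u i s)"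

definition deviate :: "'p set \<Rightarrow> ('p \<Rightarrow> 'a \<Rightarrow> real) \<Rightarrow> ('p \<Rightarrow> 'a \<Rightarrow> real) \<Rightarrow> ('p \<Rightarrow> 'a \<Rightarrow> real)" where
  "deviate P \<tau> \<sigma> = (\<lambda>j. if j \<in> P then \<tau> j else \<sigma> j)"

definition nash_equilibrium ::
  "'p set \<Rightarrow> ('p \<Rightarrow> 'a set) \<Rightarrow> ('p \<Rightarrow> ('p \<Rightarrow> 'a) \<Rightarrow> real) \<Rightarrow> ('p \<Rightarrow> 'a \<Rightarrow> real) \<Rightarrow> bool" where
  "nash_equilibrium N S u \<sigma> \<longleftrightarrow> mixed_profile N S \<sigma> \<and>
     (\<forall>i\<in>N. \<forall>p. mixed_strategy (S i) p \<longrightarrow>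
        exp_util N S u (\<sigma>(i := p)) i \<le> exp_util N S u \<sigma> i)"

definition alliance_resistant_NE ::
  "'p set \<Rightarrow> ('p \<Rightarrow> 'a set) \<Rightarrow> ('p \<Rightarrow> ('p \<Rightarrow> 'a) \<Rightarrow> real) \<Rightarrow> ('p \<Rightarrow> 'a \<Rightarrow> real) \<Rightarrow> bool" where
  "alliance_resistant_NE N S u \<sigma> \<longleftrightarrow> mixed_profile N S \<sigma> \<and>
     (\<forall>P. P \<subseteq> N \<longrightarrow> P \<noteq> {} \<longrightarrow> (\<forall>\<tau>. (\<forall>i\<in>P. mixed_strategy (S i) (\<tau> i)) \<longrightarrow>
        (\<Sum>i\<in>P. exp_util N S u (deviate P \<tau> \<sigma>) i) \<le> (\<Sum>i\<in>P. exp_util N S u \<sigma> i)))"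

definition rig_g :: "int \<Rightarrow> int \<Rightarrow> int \<Rightarrow> int" where
  "rig_g m f l = (let r = l mod m in
      if 0 \<le> r \<and> r \<le> f - 1 then 1 else if m - f \<le> r \<and> r \<le> m - 1 then -1 else 0)"

definition rig_B :: "nat \<Rightarrow> nat \<Rightarrow> nat \<Rightarrow> nat \<Rightarrow> int" where
  "rig_B m f a b = rig_g (int m) (int f) (int b - int a)"

definition rig_players :: "nat \<Rightarrow> nat set" where
  "rig_players n = {1..n}"

definition rig_strats :: "nat \<Rightarrow> nat \<Rightarrow> nat set" where
  "rig_strats m i = {0..<m}"

definition rig_util :: "nat \<Rightarrow> nat \<Rightarrow> nat \<Rightarrow> (nat \<Rightarrow> nat) \<Rightarrow> real" where
  "rig_util m f i s = (if odd i then real_of_int (rig_B m f (s i) (s (i + 1)))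
                       else - real_of_int (rig_B m f (s (i - 1)) (s i)))"

definition uniform_profile :: "nat \<Rightarrow> nat \<Rightarrow> nat \<Rightarrow> real" where
  "uniform_profile m i x = 1 / real m"

end

theory Submission
  imports Defs
begin

(* The game splits into independent two-player zero-sum games between partners 2k-1 and 2k,
   played with the circulant matrix B, whose row and column sums all vanish.  Hence a player
   facing a uniformly mixing partner earns 0 whatever he does, and inside an alliance the
   payoffs of partners cancel; so no alliance gains against the uniform profile.
   Conversely, in any equilibrium both partners must make every pure reply of the other
   worthless: the equilibrium payoff v lies below every column payoff and above every row payoff,
   and these margins sum to 0, so they all vanish.  A vanishing margin p B = 0 is a convolution
   identity for g, which says that the window sums W b = p(b) + ... + p(b-f+1) are f-periodic
   modulo m; since gcd(f, m) = 1 they are constant, which makes p itself f-periodic and hence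
   constant. *)

lemma sum_PiE_prod_indicator:
  fixes \<sigma> :: "'p \<Rightarrow> 'a \<Rightarrow> real"
  assumes N: "finite N" and S: "\<And>j. j \<in> N \<Longrightarrow> finite (S j)"
    and \<sigma>: "\<And>j. j \<in> N \<Longrightarrow> sum (\<sigma> j) (S j) = 1"
    and ik: "i \<in> N" "k \<in> N" "i \<noteq> k" and xy: "x \<in> S i" "y \<in> S k"
  shows "(\<Sum>s\<in>PiE N S. (\<Prod>j\<in>N. \<sigma> j (s j)) * of_bool (s i = x \<and> s k = y)) = \<sigma> i x * \<sigma> k y"
proof -
  define \<tau> where "\<tau> j z = \<sigma> j z * (if j = i then of_bool (z = x) else 1)
    * (if j = k then of_bool (z = y) else 1)" for j z
  have "(\<Prod>j\<in>N. \<sigma> j (s j)) * of_bool (s i = x \<and> s k = y) = (\<Prod>j\<in>N. \<tau> j (s j))" for s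
    using N ik by (simp add: \<tau>_def prod.distrib)
  then have "(\<Sum>s\<in>PiE N S. (\<Prod>j\<in>N. \<sigma> j (s j)) * of_bool (s i = x \<and> s k = y))
      = (\<Prod>j\<in>N. \<Sum>z\<in>S j. \<tau> j z)"
    using N S by (simp add: prod_sum_PiE)
  also have "\<dots> = (\<Prod>j\<in>N. (if j = i then \<sigma> i x else 1) * (if j = k then \<sigma> k y else 1))"
  proof (intro prod.cong refl)
    fix j assume j: "j \<in> N"
    have "\<tau> j = (if j = i then (\<lambda>z. if z = x then \<sigma> i x else 0)
        else if j = k then (\<lambda>z. if z = y then \<sigma> k y else 0) else \<sigma> j)"
      using ik by (auto simp: \<tau>_def)
    then show "(\<Sum>z\<in>S j. \<tau> j z) = (if j = i then \<sigma> i x else 1) * (if j = k then \<sigma> k y else 1)"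
      using S \<sigma>[OF j] ik xy by simp
  qed
  also have "\<dots> = \<sigma> i x * \<sigma> k y"
    using N ik by (simp add: prod.distrib)
  finally show ?thesis .
qed

lemma sum_PiE_prod_two_coords:
  fixes \<sigma> :: "'p \<Rightarrow> 'a \<Rightarrow> real"
  assumes N: "finite N" and S: "\<And>j. j \<in> N \<Longrightarrow> finite (S j)"
    and \<sigma>: "\<And>j. j \<in> N \<Longrightarrow> sum (\<sigma> j) (S j) = 1"
    and ik: "i \<in> N" "k \<in> N" "i \<noteq> k"
  shows "(\<Sum>s\<in>PiE N S. (\<Prod>j\<in>N. \<sigma> j (s j)) * h (s i) (s k))
       = (\<Sum>x\<in>S i. \<Sum>y\<in>S k. \<sigma> i x * \<sigma> k y * h x y)"
proof -
  have "h (s i) (s k) = (\<Sum>x\<in>S i. \<Sum>y\<in>S k. h x y * of_bool (s i = x \<and> s k = y))"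
    if "s \<in> PiE N S" for s
  proof -
    have "(\<Sum>x\<in>S i. \<Sum>y\<in>S k. h x y * of_bool (s i = x \<and> s k = y))
        = (\<Sum>x\<in>S i. if x = s i then (\<Sum>y\<in>S k. if y = s k then h x y else 0) else 0)"
      by (auto intro!: sum.cong)
    then show ?thesis using that ik S by (simp add: PiE_mem)
  qed
  then have "(\<Sum>s\<in>PiE N S. (\<Prod>j\<in>N. \<sigma> j (s j)) * h (s i) (s k))
      = (\<Sum>x\<in>S i. \<Sum>y\<in>S k. h x y *
           (\<Sum>s\<in>PiE N S. (\<Prod>j\<in>N. \<sigma> j (s j)) * of_bool (s i = x \<and> s k = y)))"
    by (simp add: sum_distrib_left sum_distrib_right sum.swap[of _ "PiE N S"] mult_ac)
  also have "\<dots> = (\<Sum>x\<in>S i. \<Sum>y\<in>S k. \<sigma> i x * \<sigma> k y * h x y)"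
    using sum_PiE_prod_indicator[OF N S \<sigma> ik] by (simp add: mult_ac)
  finally show ?thesis .
qed

lemma sums_eq_0_if_separated:
  fixes r :: "'a \<Rightarrow> real" and c :: "'b \<Rightarrow> real"
  assumes A: "finite A" "A \<noteq> {}" and B: "finite B" "B \<noteq> {}"
    and sums: "sum r A = 0" "sum c B = 0"
    and r: "\<And>x. x \<in> A \<Longrightarrow> r x \<le> v" and c: "\<And>y. y \<in> B \<Longrightarrow> v \<le> c y"
  shows "\<forall>x\<in>A. r x = 0" and "\<forall>y\<in>B. c y = 0"
proof -
  have "0 \<le> real (card A) * v"
    using sum_mono[of A r "\<lambda>_. v"] r sums by simp
  then have "0 \<le> v" using A by (simp add: zero_le_mult_iff)
  moreover have "real (card B) * v \<le> 0"
    using sum_mono[of B "\<lambda>_. v" c] c sums by simp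
  then have "v \<le> 0" using B by (simp add: mult_le_0_iff)
  ultimately have "v = 0" by simp
  then show "\<forall>x\<in>A. r x = 0" "\<forall>y\<in>B. c y = 0"
    using sum_nonneg_eq_0_iff[of A "\<lambda>x. - r x"] sum_nonneg_eq_0_iff[of B c] A B sums r c
    by (auto simp: sum_negf)
qed

lemma sum_eq_0_if_antisymmetric_involution:
  fixes e :: "'a \<Rightarrow> 'b::linordered_ab_group_add"
  assumes "finite P" and inv: "\<And>i. i \<in> P \<Longrightarrow> \<pi> (\<pi> i) = i"
    and anti: "\<And>i. i \<in> P \<Longrightarrow> \<pi> i \<in> P \<Longrightarrow> e (\<pi> i) = - e i"
    and single: "\<And>i. i \<in> P \<Longrightarrow> \<pi> i \<notin> P \<Longrightarrow> e i = 0"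
  shows "sum e P = 0"
proof -
  let ?Q = "{i \<in> P. \<pi> i \<in> P}"
  have "sum e ?Q = sum (\<lambda>i. e (\<pi> i)) ?Q"
    by (rule sum.reindex_bij_witness[of _ \<pi> \<pi>]) (simp_all add: inv)
  also have "\<dots> = - sum e ?Q"
    by (simp add: anti sum_negf)
  finally have "sum e ?Q = 0"
    by simp
  moreover have "sum e P = sum e ?Q"
    by (rule sum.mono_neutral_right) (use \<open>finite P\<close> single in auto)
  ultimately show ?thesis
    by simp
qed

lemma periodic_add_mult:
  fixes F :: "int \<Rightarrow> 'a"
  assumes per: "\<And>z. F (z + p) = F z"
  shows "F (z + u * p) = F z"
proof (induction u arbitrary: z rule: int_induct[where k = 0])
  case (step1 u)
  then show ?case using per[of "z + u * p"] by (simp add: algebra_simps)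
next
  case (step2 u)
  then show ?case using per[of "z + (u - 1) * p"] by (simp add: algebra_simps)
qed simp

lemma periodic_mod:
  fixes F :: "int \<Rightarrow> 'a"
  assumes "\<And>z. F (z + p) = F z"
  shows "F (z mod p) = F z"
  using periodic_add_mult[where F = F, OF assms, of "z mod p" "z div p"] by simp

lemma periodic_coprime_imp_const:
  fixes F :: "int \<Rightarrow> 'a"
  assumes "\<And>z. F (z + p) = F z" and "\<And>z. F (z + q) = F z" and "coprime p q"
  shows "F z = F 0"
proof -
  obtain u v where "u * p + v * q = 1"
    using bezout_int[of p q] \<open>coprime p q\<close> by auto
  then have "F (z + 1) = F z" for z
    using periodic_add_mult[where F = F, OF assms(1), of "z + v * q" u]
      periodic_add_mult[where F = F, OF assms(2), of z v]
    by (simp add: algebra_simps)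
  then show ?thesis
    using periodic_add_mult[of F 1 0 z] by simp
qed

lemma sum_periodic_shift:
  fixes h :: "int \<Rightarrow> 'a::comm_monoid_add"
  assumes per: "\<And>z. h (z + int m) = h z"
  shows "(\<Sum>y\<in>{0..<m}. h (int y + c)) = (\<Sum>y\<in>{0..<m}. h (int y))"
proof (rule sum.reindex_bij_witness[of _ "\<lambda>y. nat ((int y - c) mod int m)"
      "\<lambda>y. nat ((int y + c) mod int m)"])
  show "h (int (nat ((int y + c) mod int m))) = h (int y + c)" if "y \<in> {0..<m}" for y
    using that periodic_mod[where F = h, OF per] by simp
qed (auto simp: mod_simps nat_less_iff)

lemma sum_periodic_reflect:
  fixes h :: "int \<Rightarrow> 'a::comm_monoid_add"
  assumes per: "\<And>z. h (z + int m) = h z"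
  shows "(\<Sum>y\<in>{0..<m}. h (c - int y)) = (\<Sum>y\<in>{0..<m}. h (int y))"
proof (rule sum.reindex_bij_witness[of _ "\<lambda>y. nat ((c - int y) mod int m)"
      "\<lambda>y. nat ((c - int y) mod int m)"])
  show "h (int (nat ((c - int y) mod int m))) = h (c - int y)" if "y \<in> {0..<m}" for y
    using that periodic_mod[where F = h, OF per] by simp
qed (auto simp: mod_simps nat_less_iff)

lemma uniform_if_const_sum_eq_1:
  fixes p :: "nat \<Rightarrow> real"
  assumes const: "\<And>y. y < m \<Longrightarrow> p y = p 0" and sum: "sum p {0..<m} = 1" and x: "x < m"
  shows "p x = 1 / real m"
proof -
  have "sum p {0..<m} = sum (\<lambda>_. p 0) {0..<m}"
    by (intro sum.cong refl const) simp
  then have "real m * p 0 = 1"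
    using sum by simp
  then show ?thesis
    using const[OF x] x by (simp add: field_simps)
qed

lemma rig_g_add_period: "rig_g m f (z + m) = rig_g m f z"
  by (simp add: rig_g_def)

lemma rig_g_mod: "rig_g m f (z mod m) = rig_g m f z"
  by (simp add: rig_g_def)

lemma rig_g_of_nat:
  assumes "l < m" "2 * f \<le> m"
  shows "rig_g (int m) (int f) (int l) = (if l < f then 1 else if m - f \<le> l then -1 else 0)"
  using assms by (auto simp: rig_g_def Let_def)

lemma rig_g_convolution_split:
  fixes R :: "int \<Rightarrow> real"
  assumes "2 * f \<le> m"
  shows "(\<Sum>l\<in>{0..<m}. real_of_int (rig_g (int m) (int f) (int l)) * R (b - int l))
     = (\<Sum>l\<in>{0..<f}. R (b - int l)) - (\<Sum>l\<in>{0..<f}. R (b - int (l + (m - f))))"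
proof -
  let ?h = "\<lambda>l. real_of_int (rig_g (int m) (int f) (int l)) * R (b - int l)"
  have "sum ?h {0..<m} = sum ?h {0..<f} + sum ?h {f..<m-f} + sum ?h {m-f..<m}"
    using assms by (simp add: sum.atLeastLessThan_concat)
  also have "sum ?h {0..<f} = (\<Sum>l\<in>{0..<f}. R (b - int l))"
    using assms by (intro sum.cong) (auto simp: rig_g_of_nat)
  also have "sum ?h {f..<m-f} = 0"
    using assms by (intro sum.neutral) (auto simp: rig_g_of_nat)
  also have "sum ?h {m-f..<m} = (\<Sum>l\<in>{m-f..<m}. - R (b - int l))"
    using assms by (intro sum.cong) (auto simp: rig_g_of_nat)
  also have "\<dots> = - (\<Sum>l\<in>{0 + (m-f)..<f + (m-f)}. R (b - int l))"
    using assms by (simp add: sum_negf)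
  also have "(\<Sum>l\<in>{0 + (m-f)..<f + (m-f)}. R (b - int l)) = (\<Sum>l\<in>{0..<f}. R (b - int (l + (m - f))))"
    by (rule sum.shift_bounds_nat_ivl)
  finally show ?thesis by simp
qed

lemma rig_g_sum_eq_0:
  assumes "2 * f \<le> m"
  shows "(\<Sum>l\<in>{0..<m}. real_of_int (rig_g (int m) (int f) (int l))) = 0"
  using rig_g_convolution_split[OF assms, of "\<lambda>_. 1" 0] by simp

lemma rig_B_row_sum:
  assumes "2 * f \<le> m"
  shows "(\<Sum>y\<in>{0..<m}. real_of_int (rig_B m f x y)) = 0"
proof -
  have "(\<Sum>y\<in>{0..<m}. real_of_int (rig_B m f x y))
      = (\<Sum>y\<in>{0..<m}. real_of_int (rig_g (int m) (int f) (int y + - int x)))"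
    by (simp add: rig_B_def)
  also have "\<dots> = (\<Sum>y\<in>{0..<m}. real_of_int (rig_g (int m) (int f) (int y)))"
    by (rule sum_periodic_shift) (simp add: rig_g_add_period)
  finally show ?thesis using rig_g_sum_eq_0[OF assms] by simp
qed

lemma rig_B_col_sum:
  assumes "2 * f \<le> m"
  shows "(\<Sum>x\<in>{0..<m}. real_of_int (rig_B m f x y)) = 0"
proof -
  have "(\<Sum>x\<in>{0..<m}. real_of_int (rig_B m f x y))
      = (\<Sum>x\<in>{0..<m}. real_of_int (rig_g (int m) (int f) (int y - int x)))"
    by (simp add: rig_B_def)
  also have "\<dots> = (\<Sum>x\<in>{0..<m}. real_of_int (rig_g (int m) (int f) (int x)))"
    by (rule sum_periodic_reflect) (simp add: rig_g_add_period)
  finally show ?thesis using rig_g_sum_eq_0[OF assms] by simp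
qed

lemma rig_g_convolution_eq_0_imp_const:
  fixes R :: "int \<Rightarrow> real"
  assumes per: "\<And>z. R (z + int m) = R z" and f: "1 \<le> f" "2 * f \<le> m" "coprime f m"
    and conv: "\<And>b. (\<Sum>l\<in>{0..<m}. real_of_int (rig_g (int m) (int f) (int l)) * R (b - int l)) = 0"
  shows "R z = R 0"
proof -
  have coprime_mf: "coprime (int m) (int f)"
    using f by (simp add: coprime_commute)
  define W where "W b = (\<Sum>l\<in>{0..<f}. R (b - int l))" for b
  have W_period_m: "W (b + int m) = W b" for b
  proof -
    have "R (b + int m - int l) = R (b - int l)" for l
      using per[of "b - int l"] by (simp add: algebra_simps)
    then show ?thesis by (simp add: W_def)
  qed
  have W_period_f: "W (b + int f) = W b" for b
  proof -
    have "R (b - int (l + (m - f))) = R (b + int f - int l)" for l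
      using per[of "b - int (l + (m - f))"] f by (simp add: algebra_simps)
    then show ?thesis
      using conv[of b] rig_g_convolution_split[OF f(2), of R b] by (simp add: W_def)
  qed
  have W_const: "W b = W 0" for b
    by (rule periodic_coprime_imp_const[where F = W, OF W_period_m W_period_f coprime_mf])
  have R_period_f: "R (c + int f) = R c" for c
  proof -
    obtain k where k: "f = Suc k" using f by (cases f) auto
    have "W (c + int f) = W (c + int f - 1)"
      using W_const[of "c + int f"] W_const[of "c + int f - 1"] by simp
    moreover have "W (c + int f) = R (c + int f) + (\<Sum>l<k. R (c + int f - int (Suc l)))"
      unfolding W_def k atLeast0LessThan by (subst sum.lessThan_Suc_shift) simp
    moreover have "W (c + int f - 1) = (\<Sum>l<k. R (c + int f - 1 - int l)) + R (c + int f - 1 - int k)"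
      unfolding W_def k atLeast0LessThan by simp
    ultimately show ?thesis using k by (simp add: algebra_simps)
  qed
  show ?thesis
    by (rule periodic_coprime_imp_const[where F = R, OF per R_period_f coprime_mf])
qed

lemma rig_B_left_kernel:
  fixes p :: "nat \<Rightarrow> real"
  assumes f: "1 \<le> f" "2 * f \<le> m" "coprime f m"
    and ker: "\<And>b. b < m \<Longrightarrow> (\<Sum>x\<in>{0..<m}. p x * real_of_int (rig_B m f x b)) = 0"
    and "sum p {0..<m} = 1" and "x < m"
  shows "p x = 1 / real m"
proof -
  have m: "0 < m" using f by simp
  define R where "R z = p (nat (z mod int m))" for z
  have R_period: "R (z + int m) = R z" for z
    by (simp add: R_def)
  have "(\<Sum>l\<in>{0..<m}. real_of_int (rig_g (int m) (int f) (int l)) * R (b - int l)) = 0" for b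
  proof -
    define h where "h z = real_of_int (rig_g (int m) (int f) z) * R (b - z)" for z
    have h_period: "h (z + int m) = h z" for z
      using R_period[of "b - z - int m"] by (simp add: h_def rig_g_add_period algebra_simps)
    have "(\<Sum>l\<in>{0..<m}. h (int l)) = (\<Sum>y\<in>{0..<m}. h (b - int y))"
      by (rule sum_periodic_reflect[where h = h, OF h_period, symmetric])
    also have "\<dots> = (\<Sum>y\<in>{0..<m}. p y * real_of_int (rig_B m f y (nat (b mod int m))))"
    proof (intro sum.cong refl)
      fix y assume "y \<in> {0..<m}"
      moreover have "rig_g (int m) (int f) (b - int y) = rig_g (int m) (int f) (b mod int m - int y)"
        by (metis rig_g_mod mod_diff_left_eq)
      ultimately show "h (b - int y) = p y * real_of_int (rig_B m f y (nat (b mod int m)))"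
        using m by (simp add: h_def R_def rig_B_def)
    qed
    also have "\<dots> = 0"
      using m by (intro ker) (simp add: nat_less_iff)
    finally show ?thesis by (simp add: h_def)
  qed
  then have "R z = R 0" for z
    by (rule rig_g_convolution_eq_0_imp_const[where R = R, OF R_period f])
  then have "p y = p 0" if "y < m" for y
    using that \<open>\<And>z. R z = R 0\<close>[of "int y"] by (simp add: R_def)
  then show ?thesis
    using uniform_if_const_sum_eq_1 assms by blast
qed

lemma rig_B_right_kernel:
  fixes q :: "nat \<Rightarrow> real"
  assumes f: "1 \<le> f" "2 * f \<le> m" "coprime f m"
    and ker: "\<And>a. a < m \<Longrightarrow> (\<Sum>y\<in>{0..<m}. q y * real_of_int (rig_B m f a y)) = 0"
    and "sum q {0..<m} = 1" and "x < m"
  shows "q x = 1 / real m"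
proof -
  have m: "0 < m" using f by simp
  \<comment> \<open>B q is the convolution of g with the reflection of q\<close>
  define R where "R z = q (nat ((- z) mod int m))" for z
  have R_period: "R (z + int m) = R z" for z
    by (simp add: R_def mod_simps)
  have "(\<Sum>l\<in>{0..<m}. real_of_int (rig_g (int m) (int f) (int l)) * R (b - int l)) = 0" for b
  proof -
    define h where "h z = real_of_int (rig_g (int m) (int f) z) * R (b - z)" for z
    have h_period: "h (z + int m) = h z" for z
      using R_period[of "b - z - int m"] by (simp add: h_def rig_g_add_period algebra_simps)
    have "(\<Sum>l\<in>{0..<m}. h (int l)) = (\<Sum>y\<in>{0..<m}. h (int y + b))"
      by (rule sum_periodic_shift[where h = h, OF h_period, symmetric])
    also have "\<dots> = (\<Sum>y\<in>{0..<m}. q y * real_of_int (rig_B m f (nat ((- b) mod int m)) y))"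
    proof (intro sum.cong refl)
      fix y assume "y \<in> {0..<m}"
      moreover have "rig_g (int m) (int f) (int y + b) = rig_g (int m) (int f) (int y - (- b) mod int m)"
        by (metis rig_g_mod mod_diff_right_eq diff_minus_eq_add)
      ultimately show "h (int y + b) = q y * real_of_int (rig_B m f (nat ((- b) mod int m)) y)"
        using m by (simp add: h_def R_def rig_B_def)
    qed
    also have "\<dots> = 0"
      using m by (intro ker) (simp add: nat_less_iff)
    finally show ?thesis by (simp add: h_def)
  qed
  then have "R z = R 0" for z
    by (rule rig_g_convolution_eq_0_imp_const[where R = R, OF R_period f])
  then have "q y = q 0" if "y < m" for y
    using that \<open>\<And>z. R z = R 0\<close>[of "- int y"] by (simp add: R_def)
  then show ?thesis
    using uniform_if_const_sum_eq_1 assms by blast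
qed

definition rig_payoff :: "nat \<Rightarrow> nat \<Rightarrow> (nat \<Rightarrow> real) \<Rightarrow> (nat \<Rightarrow> real) \<Rightarrow> real" where
  "rig_payoff m f p q = (\<Sum>x\<in>{0..<m}. \<Sum>y\<in>{0..<m}. p x * q y * real_of_int (rig_B m f x y))"

lemma rig_payoff_uniform_left:
  assumes "2 * f \<le> m"
  shows "rig_payoff m f (uniform_profile m j) q = 0"
proof -
  have "rig_payoff m f (uniform_profile m j) q
      = (\<Sum>y\<in>{0..<m}. q y / real m * (\<Sum>x\<in>{0..<m}. real_of_int (rig_B m f x y)))"
    unfolding rig_payoff_def uniform_profile_def by (subst sum.swap) (simp add: sum_distrib_left)
  then show ?thesis using rig_B_col_sum[OF assms] by simp
qed

lemma rig_payoff_uniform_right: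
  assumes "2 * f \<le> m"
  shows "rig_payoff m f p (uniform_profile m j) = 0"
proof -
  have "rig_payoff m f p (uniform_profile m j)
      = (\<Sum>x\<in>{0..<m}. p x / real m * (\<Sum>y\<in>{0..<m}. real_of_int (rig_B m f x y)))"
    unfolding rig_payoff_def uniform_profile_def by (simp add: sum_distrib_left)
  then show ?thesis using rig_B_row_sum[OF assms] by simp
qed

lemma rig_payoff_point_left:
  assumes "a < m"
  shows "rig_payoff m f (\<lambda>x. if x = a then 1 else 0) q
       = (\<Sum>y\<in>{0..<m}. q y * real_of_int (rig_B m f a y))"
proof -
  have "(if x = a then 1 else 0) * q y * real_of_int (rig_B m f x y)
      = (if x = a then q y * real_of_int (rig_B m f a y) else 0)" for x y
    by simp
  then show ?thesis
    using assms unfolding rig_payoff_def by (subst sum.swap) simp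
qed

lemma rig_payoff_point_right:
  assumes "b < m"
  shows "rig_payoff m f p (\<lambda>y. if y = b then 1 else 0)
       = (\<Sum>x\<in>{0..<m}. p x * real_of_int (rig_B m f x b))"
proof -
  have "p x * (if y = b then 1 else 0) * real_of_int (rig_B m f x y)
      = (if y = b then p x * real_of_int (rig_B m f x b) else 0)" for x y
    by simp
  then show ?thesis
    using assms unfolding rig_payoff_def by simp
qed

lemma nash_equilibrium_sum_eq_1:
  assumes "nash_equilibrium N S u \<sigma>" "i \<in> N"
  shows "sum (\<sigma> i) (S i) = 1"
  using assms by (simp add: nash_equilibrium_def mixed_profile_def mixed_strategy_def)

lemma mixed_strategy_point:
  assumes "finite A" "b \<in> A"
  shows "mixed_strategy A (\<lambda>y. if y = b then 1 else 0)"
  using assms by (simp add: mixed_strategy_def)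

definition rig_partner :: "nat \<Rightarrow> nat" where
  "rig_partner i = (if odd i then i + 1 else i - 1)"

lemma rig_partner_in_players:
  assumes "even n" "i \<in> rig_players n"
  shows "rig_partner i \<in> rig_players n"
  using assms unfolding rig_partner_def rig_players_def atLeastAtMost_iff by presburger

lemma rig_partner_partner:
  assumes "i \<in> rig_players n"
  shows "rig_partner (rig_partner i) = i"
  using assms unfolding rig_partner_def rig_players_def atLeastAtMost_iff by presburger

lemma exp_util_rig_odd:
  assumes "even n" and i: "i \<in> rig_players n" "odd i"
    and \<rho>: "\<And>j. j \<in> rig_players n \<Longrightarrow> sum (\<rho> j) {0..<m} = 1"
  shows "exp_util (rig_players n) (rig_strats m) (rig_util m f) \<rho> i
       = rig_payoff m f (\<rho> i) (\<rho> (i + 1))"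
proof -
  have "i + 1 \<in> rig_players n"
    using rig_partner_in_players[OF \<open>even n\<close> i(1)] i(2) by (simp add: rig_partner_def)
  then show ?thesis
    using sum_PiE_prod_two_coords[of "rig_players n" "rig_strats m" \<rho> i "i + 1"
        "\<lambda>x y. real_of_int (rig_B m f x y)"] i \<rho>
    by (simp add: exp_util_def rig_util_def rig_payoff_def rig_strats_def rig_players_def mult_ac)
qed

lemma exp_util_rig_even:
  assumes "even n" and i: "i \<in> rig_players n" "even i"
    and \<rho>: "\<And>j. j \<in> rig_players n \<Longrightarrow> sum (\<rho> j) {0..<m} = 1"
  shows "exp_util (rig_players n) (rig_strats m) (rig_util m f) \<rho> i
       = - rig_payoff m f (\<rho> (i - 1)) (\<rho> i)"
proof -
  have "i - 1 \<in> rig_players n" "i \<noteq> i - 1"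
    using rig_partner_in_players[OF \<open>even n\<close> i(1)] i
    by (auto simp: rig_partner_def rig_players_def)
  then show ?thesis
    using sum_PiE_prod_two_coords[of "rig_players n" "rig_strats m" \<rho> "i - 1" i
        "\<lambda>x y. - real_of_int (rig_B m f x y)"] i \<rho>
    by (simp add: exp_util_def rig_util_def rig_payoff_def rig_strats_def rig_players_def
        sum_negf mult_ac)
qed

lemma exp_util_rig_partner:
  assumes "even n" and i: "i \<in> rig_players n"
    and \<rho>: "\<And>j. j \<in> rig_players n \<Longrightarrow> sum (\<rho> j) {0..<m} = 1"
  shows "exp_util (rig_players n) (rig_strats m) (rig_util m f) \<rho> (rig_partner i)
       = - exp_util (rig_players n) (rig_strats m) (rig_util m f) \<rho> i"
proof -
  have j: "rig_partner i \<in> rig_players n"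
    by (rule rig_partner_in_players[OF \<open>even n\<close> i])
  show ?thesis
  proof (cases "odd i")
    case True
    then show ?thesis
      using exp_util_rig_odd[OF \<open>even n\<close> i True \<rho>] exp_util_rig_even[OF \<open>even n\<close> j _ \<rho>]
      by (simp add: rig_partner_def)
  next
    case False
    then have "odd (i - 1)" "i - 1 + 1 = i"
      using i by (auto simp: rig_players_def)
    then show ?thesis
      using exp_util_rig_odd[OF \<open>even n\<close> j _ \<rho>] exp_util_rig_even[OF \<open>even n\<close> i _ \<rho>] False
      by (simp add: rig_partner_def)
  qed
qed

lemma exp_util_rig_eq_0_if_partner_uniform:
  assumes "even n" "2 * f \<le> m" and i: "i \<in> rig_players n"
    and \<rho>: "\<And>j. j \<in> rig_players n \<Longrightarrow> sum (\<rho> j) {0..<m} = 1"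
    and uniform: "\<rho> (rig_partner i) = uniform_profile m (rig_partner i)"
  shows "exp_util (rig_players n) (rig_strats m) (rig_util m f) \<rho> i = 0"
proof (cases "odd i")
  case True
  then show ?thesis
    using exp_util_rig_odd[OF \<open>even n\<close> i True \<rho>] uniform
      rig_payoff_uniform_right[OF \<open>2 * f \<le> m\<close>]
    by (simp add: rig_partner_def)
next
  case False
  then show ?thesis
    using exp_util_rig_even[OF \<open>even n\<close> i _ \<rho>] False uniform
      rig_payoff_uniform_left[OF \<open>2 * f \<le> m\<close>]
    by (simp add: rig_partner_def)
qed

theorem rig_uniform_alliance_resistant:
  assumes "even n" "2 * f \<le> m" "0 < m"
  shows "alliance_resistant_NE (rig_players n) (rig_strats m) (rig_util m f) (uniform_profile m)"
  unfolding alliance_resistant_NE_def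
proof (intro conjI allI impI)
  let ?N = "rig_players n" and ?u = "exp_util (rig_players n) (rig_strats m) (rig_util m f)"
  have uniform: "mixed_strategy {0..<m} (uniform_profile m j)" for j
    using \<open>0 < m\<close> by (simp add: mixed_strategy_def uniform_profile_def)
  then show "mixed_profile ?N (rig_strats m) (uniform_profile m)"
    by (simp add: mixed_profile_def rig_strats_def)
  fix P \<tau>
  assume P: "P \<subseteq> ?N" and "P \<noteq> {}" and \<tau>: "\<forall>i\<in>P. mixed_strategy (rig_strats m i) (\<tau> i)"
  define \<rho> where "\<rho> = deviate P \<tau> (uniform_profile m)"
  have \<rho>: "sum (\<rho> j) {0..<m} = 1" for j
    using \<tau> uniform[of j] by (simp add: \<rho>_def deviate_def mixed_strategy_def rig_strats_def)
  have U: "sum (uniform_profile m j) {0..<m} = 1" for j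
    using uniform[of j] by (simp add: mixed_strategy_def)
  have finite_P: "finite P"
    using P finite_subset by (auto simp: rig_players_def)
  have "(\<Sum>i\<in>P. ?u \<rho> i) = 0"
  proof (rule sum_eq_0_if_antisymmetric_involution[OF finite_P])
    fix i assume "i \<in> P"
    then have i: "i \<in> ?N" using P by auto
    show "rig_partner (rig_partner i) = i"
      by (rule rig_partner_partner[OF i])
    show "?u \<rho> (rig_partner i) = - ?u \<rho> i"
      by (rule exp_util_rig_partner[OF \<open>even n\<close> i \<rho>])
    show "?u \<rho> i = 0" if "rig_partner i \<notin> P"
      using that exp_util_rig_eq_0_if_partner_uniform[OF \<open>even n\<close> \<open>2 * f \<le> m\<close> i \<rho>]
      by (simp add: \<rho>_def deviate_def)
  qed
  moreover have "(\<Sum>i\<in>P. ?u (uniform_profile m) i) = 0"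
    using exp_util_rig_eq_0_if_partner_uniform[OF \<open>even n\<close> \<open>2 * f \<le> m\<close> _ U] P
    by (intro sum.neutral) auto
  ultimately show "(\<Sum>i\<in>P. ?u (deviate P \<tau> (uniform_profile m)) i)
      \<le> (\<Sum>i\<in>P. ?u (uniform_profile m) i)"
    by (simp add: \<rho>_def)
qed

lemma rig_equilibrium_margins_eq_0:
  assumes "even n" "2 * f \<le> m" "0 < m"
    and ne: "nash_equilibrium (rig_players n) (rig_strats m) (rig_util m f) \<sigma>"
    and a: "a \<in> rig_players n" "odd a"
  shows "\<forall>b\<in>{0..<m}. (\<Sum>x\<in>{0..<m}. \<sigma> a x * real_of_int (rig_B m f x b)) = 0"
    and "\<forall>b\<in>{0..<m}. (\<Sum>y\<in>{0..<m}. \<sigma> (a + 1) y * real_of_int (rig_B m f b y)) = 0"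
proof -
  let ?N = "rig_players n" and ?u = "exp_util (rig_players n) (rig_strats m) (rig_util m f)"
  let ?p = "\<sigma> a" and ?q = "\<sigma> (a + 1)" and ?point = "\<lambda>b y. if y = b then 1 else (0::real)"
  define col where "col b = (\<Sum>x\<in>{0..<m}. ?p x * real_of_int (rig_B m f x b))" for b
  define row where "row b = (\<Sum>y\<in>{0..<m}. ?q y * real_of_int (rig_B m f b y))" for b
  have a': "a + 1 \<in> ?N" "even (a + 1)"
    using rig_partner_in_players[OF \<open>even n\<close> a(1)] a(2) by (auto simp: rig_partner_def)
  have best_reply: "?u (\<sigma>(i := p)) i \<le> ?u \<sigma> i" if "i \<in> ?N" "mixed_strategy {0..<m} p" for i p
    using ne that by (simp add: nash_equilibrium_def rig_strats_def)
  have \<sigma>: "sum (\<sigma> j) {0..<m} = 1" if "j \<in> ?N" for j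
    using nash_equilibrium_sum_eq_1[OF ne that] by (simp add: rig_strats_def)
  have row_le: "row b \<le> rig_payoff m f ?p ?q" if b: "b \<in> {0..<m}" for b
  proof -
    have deviation: "sum ((\<sigma>(a := ?point b)) j) {0..<m} = 1" if "j \<in> ?N" for j
      using \<sigma>[OF that] b by simp
    have "row b = ?u (\<sigma>(a := ?point b)) a"
      using exp_util_rig_odd[where \<rho> = "\<sigma>(a := ?point b)", OF \<open>even n\<close> a deviation] b
      by (simp add: row_def rig_payoff_point_left)
    also have "\<dots> \<le> ?u \<sigma> a"
      using b by (intro best_reply[OF a(1)] mixed_strategy_point) auto
    also have "\<dots> = rig_payoff m f ?p ?q"
      by (rule exp_util_rig_odd[OF \<open>even n\<close> a \<sigma>])
    finally show ?thesis .
  qed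
  have le_col: "rig_payoff m f ?p ?q \<le> col b" if b: "b \<in> {0..<m}" for b
  proof -
    have deviation: "sum ((\<sigma>(a + 1 := ?point b)) j) {0..<m} = 1" if "j \<in> ?N" for j
      using \<sigma>[OF that] b by simp
    have "- col b = ?u (\<sigma>(a + 1 := ?point b)) (a + 1)"
      using exp_util_rig_even[where \<rho> = "\<sigma>(a + 1 := ?point b)", OF \<open>even n\<close> a' deviation] b
      by (simp add: col_def rig_payoff_point_right)
    also have "\<dots> \<le> ?u \<sigma> (a + 1)"
      using b by (intro best_reply[OF a'(1)] mixed_strategy_point) auto
    also have "\<dots> = - rig_payoff m f ?p ?q"
      using exp_util_rig_even[OF \<open>even n\<close> a' \<sigma>] by simp
    finally show ?thesis by simp
  qed
  have "sum row {0..<m} = (\<Sum>y\<in>{0..<m}. ?q y * (\<Sum>b\<in>{0..<m}. real_of_int (rig_B m f b y)))"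
    unfolding row_def by (subst sum.swap) (simp add: sum_distrib_left)
  then have row_sum: "sum row {0..<m} = 0"
    by (simp add: rig_B_col_sum[OF \<open>2 * f \<le> m\<close>])
  have "sum col {0..<m} = (\<Sum>x\<in>{0..<m}. ?p x * (\<Sum>b\<in>{0..<m}. real_of_int (rig_B m f x b)))"
    unfolding col_def by (subst sum.swap) (simp add: sum_distrib_left)
  then have col_sum: "sum col {0..<m} = 0"
    by (simp add: rig_B_row_sum[OF \<open>2 * f \<le> m\<close>])
  have nonempty: "{0..<m} \<noteq> {}"
    using \<open>0 < m\<close> by simp
  show "\<forall>b\<in>{0..<m}. col b = 0" "\<forall>b\<in>{0..<m}. row b = 0"
    using sums_eq_0_if_separated[OF finite_atLeastLessThan nonempty finite_atLeastLessThan nonempty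
        row_sum col_sum row_le le_col]
    by (simp_all add: col_def row_def)
qed

theorem rig_equilibrium_uniform:
  assumes "even n" "1 \<le> f" "2 * f \<le> m" "coprime f m"
    and ne: "nash_equilibrium (rig_players n) (rig_strats m) (rig_util m f) \<sigma>"
    and i: "i \<in> rig_players n" and x: "x < m"
  shows "\<sigma> i x = 1 / real m"
proof -
  have "0 < m"
    using assms by simp
  obtain a where a: "a \<in> rig_players n" "odd a" and "i = a \<or> i = a + 1"
  proof (cases "odd i")
    case True
    then show ?thesis using that i by blast
  next
    case False
    then have "i - 1 \<in> rig_players n" "odd (i - 1)" "i = i - 1 + 1"
      using rig_partner_in_players[OF \<open>even n\<close> i] i
      by (auto simp: rig_partner_def rig_players_def)
    then show ?thesis using that by blast
  qed
  have \<sigma>: "sum (\<sigma> j) {0..<m} = 1" if "j \<in> rig_players n" for j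
    using nash_equilibrium_sum_eq_1[OF ne that] by (simp add: rig_strats_def)
  have "\<sigma> a x = 1 / real m"
    using rig_equilibrium_margins_eq_0(1)[OF \<open>even n\<close> \<open>2 * f \<le> m\<close> \<open>0 < m\<close> ne a]
      \<sigma>[OF a(1)] x
    by (intro rig_B_left_kernel[OF \<open>1 \<le> f\<close> \<open>2 * f \<le> m\<close> \<open>coprime f m\<close>]) auto
  moreover have "\<sigma> (a + 1) x = 1 / real m"
    using rig_equilibrium_margins_eq_0(2)[OF \<open>even n\<close> \<open>2 * f \<le> m\<close> \<open>0 < m\<close> ne a]
      \<sigma>[OF rig_partner_in_players[OF \<open>even n\<close> a(1)]] a(2) x
    by (intro rig_B_right_kernel[OF \<open>1 \<le> f\<close> \<open>2 * f \<le> m\<close> \<open>coprime f m\<close>])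
      (auto simp: rig_partner_def)
  ultimately show ?thesis
    using \<open>i = a \<or> i = a + 1\<close> by auto
qed

theorem mainTheorem2:
  fixes n m f :: nat
  assumes "even n" and "0 < n" and "2 \<le> m" and "1 \<le> f" and "2 * f \<le> m"
    and "gcd f m = 1"
  shows "alliance_resistant_NE (rig_players n) (rig_strats m) (rig_util m f) (uniform_profile m)
       \<and> (\<forall>\<sigma>. nash_equilibrium (rig_players n) (rig_strats m) (rig_util m f) \<sigma> \<longrightarrow>
              (\<forall>i\<in>rig_players n. \<forall>x\<in>rig_strats m i. \<sigma> i x = uniform_profile m i x))"
  using rig_uniform_alliance_resistant[of n f m] rig_equilibrium_uniform[of n f m] assms
  by (auto simp: coprime_iff_gcd_eq_1 rig_strats_def uniform_profile_def)

end
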